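(* Let $a\in[0,\infty)$ and let $\theta:[0,1]\to[0,\infty]$ and $\vartheta:[0,\infty]\to[0,1]$ be continuous and decreasing functions such that (i) $\vartheta(x)=1$ if and only if $x\in[0,a]$, and (ii) the function $O_{\theta,\vartheta}:[0,1]^2\to[0,1]$, $O_{\theta,\vartheta}(x,y)=\vartheta(\theta(x)+\theta(y))$, is an overlap function. Then $\theta(x)=\frac{a}{2}$ if and only if $x=1$.
   Context: "Decreasing" means non-increasing and "increasing" means non-decreasing. Arithmetic in $[0,\infty]$ uses $c+\infty=\infty$; continuity on $[0,\infty]$ refers to the usual topology of the extended half-line. An overlap function is a map $O:[0,1]^2\to[0,1]$ that is (O1) commutative, (O2) $O(x,y)=0$ iff $xy=0$, (O3) $O(x,y)=1$ iff $xy=1$, (O4) increasing in each variable, (O5) continuous. *)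

theory Defs
  imports "HOL-Analysis.Analysis" "HOL-Library.Extended_Nonnegative_Real"
begin

definition is_overlap :: "(real \<Rightarrow> real \<Rightarrow> real) \<Rightarrow> bool" where
  "is_overlap F \<longleftrightarrow>
     (\<forall>x\<in>{0..1}. \<forall>y\<in>{0..1}. F x y \<in> {0..1}) \<and>
     (\<forall>x\<in>{0..1}. \<forall>y\<in>{0..1}. F x y = F y x) \<and>
     (\<forall>x\<in>{0..1}. \<forall>y\<in>{0..1}. F x y = 0 \<longleftrightarrow> x * y = 0) \<and>
     (\<forall>x\<in>{0..1}. \<forall>y\<in>{0..1}. F x y = 1 \<longleftrightarrow> x * y = 1) \<and>
     (\<forall>x\<in>{0..1}. \<forall>x'\<in>{0..1}. \<forall>y\<in>{0..1}. x \<le> x' \<longrightarrow> F x y \<le> F x' y) \<and>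
     (\<forall>x\<in>{0..1}. \<forall>y\<in>{0..1}. \<forall>y'\<in>{0..1}. y \<le> y' \<longrightarrow> F x y \<le> F x y') \<and>
     continuous_on ({0..1} \<times> {0..1}) (\<lambda>(x, y). F x y)"

end

theory Submission
  imports Defs
begin

text \<open>By (i), the overlap condition O3 says that \<open>\<theta> x + \<theta> y \<le> a\<close> holds exactly when
  \<open>x = y = 1\<close>. In particular \<open>2 \<theta>(1) \<le> a\<close>; if the inequality were strict, continuity of \<open>\<theta>\<close>
  would give \<open>\<theta> x + \<theta> 1 < a\<close> for some \<open>x < 1\<close>, which is impossible. Hence \<open>2 \<theta>(1) = a\<close>, and
  conversely \<open>2 \<theta>(x) = a\<close> forces \<open>x = 1\<close>.\<close>

lemma continuous_on_less_near_right_endpoint: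
  fixes f :: "real \<Rightarrow> 'a::linorder_topology"
  assumes "continuous_on {a..b} f" and "a < b" and "f b < c"
  shows "\<exists>x\<in>{a..<b}. f x < c"
proof -
  have "(f \<longlongrightarrow> f b) (at b within {a..b})"
    using assms(1,2) by (simp add: continuous_on_def)
  then have "eventually (\<lambda>x. f x < c) (at b within {a..b})"
    using assms(3) by (rule order_tendstoD)
  then obtain d where "d > 0"
    and d: "\<And>x. x \<in> {a..b} \<Longrightarrow> x \<noteq> b \<Longrightarrow> dist x b < d \<Longrightarrow> f x < c"
    unfolding eventually_at by blast
  define x where "x = max a (b - d/2)"
  have "x \<in> {a..<b}" "dist x b < d"
    using \<open>d > 0\<close> \<open>a < b\<close> by (auto simp: x_def dist_real_def)
  then show ?thesis
    using d by force
qed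

lemma ennreal_add_self_eq_iff:
  fixes t :: ennreal
  assumes "0 \<le> a"
  shows "t + t = ennreal a \<longleftrightarrow> t = ennreal (a / 2)"
proof
  assume sum: "t + t = ennreal a"
  then obtain r where "0 \<le> r" "t = ennreal r"
    by (cases t rule: ennreal_cases) auto
  with sum assms show "t = ennreal (a / 2)"
    by (simp flip: ennreal_plus)
next
  assume "t = ennreal (a / 2)"
  with assms show "t + t = ennreal a"
    by (simp flip: ennreal_plus)
qed

lemma overlap_one_iff_le:
  assumes "is_overlap (\<lambda>x y. \<phi> (g x y))"
    and "\<forall>t. \<phi> t = 1 \<longleftrightarrow> t \<le> c"
    and "x \<in> {0..1}" "y \<in> {0..1}"
  shows "g x y \<le> c \<longleftrightarrow> x * y = 1"
  using assms unfolding is_overlap_def by auto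

theorem proposition3p1:
  fixes a :: real and \<theta> :: "real \<Rightarrow> ennreal" and \<phi> :: "ennreal \<Rightarrow> real"
  assumes a_nonneg: "0 \<le> a"
    and theta_cont: "continuous_on {0..1} \<theta>"
    and theta_dec: "\<forall>x\<in>{0..1}. \<forall>y\<in>{0..1}. x \<le> y \<longrightarrow> \<theta> y \<le> \<theta> x"
    and vtheta_range: "\<forall>t. \<phi> t \<in> {0..1}"
    and vtheta_cont: "continuous_on UNIV \<phi>"
    and vtheta_dec: "\<forall>s t. s \<le> t \<longrightarrow> \<phi> t \<le> \<phi> s"
    and vtheta_one: "\<forall>t. \<phi> t = 1 \<longleftrightarrow> t \<le> ennreal a"
    and overlap: "is_overlap (\<lambda>x y. \<phi> (\<theta> x + \<theta> y))"
  shows "\<forall>x\<in>{0..1}. \<theta> x = ennreal (a / 2) \<longleftrightarrow> x = 1"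
proof -
  note sum_le_iff = overlap_one_iff_le[OF overlap vtheta_one]
  have "\<theta> 1 + \<theta> 1 \<le> ennreal a"
    using sum_le_iff[of 1 1] by simp
  moreover have "\<not> \<theta> 1 + \<theta> 1 < ennreal a"
  proof
    assume "\<theta> 1 + \<theta> 1 < ennreal a"
    moreover have "continuous_on {0..1} (\<lambda>x. \<theta> x + \<theta> 1)"
      using theta_cont by (intro continuous_intros)
    ultimately obtain x where x: "x \<in> {0..<1}" and "\<theta> x + \<theta> 1 < ennreal a"
      by (meson continuous_on_less_near_right_endpoint zero_less_one)
    moreover have "x \<in> {0..1}"
      using x by simp
    ultimately show False
      using sum_le_iff[of x 1] by simp
  qed
  ultimately have "\<theta> 1 + \<theta> 1 = ennreal a"
    by (simp add: order_le_less)
  then have theta_one: "\<theta> 1 = ennreal (a / 2)"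
    using ennreal_add_self_eq_iff[OF a_nonneg] by simp
  show ?thesis
  proof (intro ballI iffI)
    fix x :: real
    assume "x \<in> {0..1}" and "\<theta> x = ennreal (a / 2)"
    then have "\<theta> x + \<theta> x = ennreal a"
      using ennreal_add_self_eq_iff[OF a_nonneg] by simp
    with \<open>x \<in> {0..1}\<close> have "x * x = 1"
      using sum_le_iff[of x x] by simp
    with \<open>x \<in> {0..1}\<close> show "x = 1"
      by (simp add: mult_eq_1)
  qed (simp add: theta_one)
qed

end
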